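(* Let $\mathcal{P}$ be a distribution on a sample space $\mathcal{S}$, $\Theta\subseteq\mathbb{R}^p$, $l$ a loss, $\mathcal{D}$ a distribution on $[0,1)$, $l_{\rm aug}(s,\theta)=\mathbb{E}_{\lambda\sim\mathcal{D}}[l(s_\lambda,\theta)]$, and $\theta_*=\arg\min_\theta\mathbb{E}_{s\sim\mathcal{P}}[l(s,\theta)]$. Assume the Disjointness assumption, and that for every $\epsilon>0$ there is $l'\in L^2(\mathcal{P})$ with $|l(s,\theta_1)-l(s,\theta_2)|\le l'(s)\|\theta_1-\theta_2\|$ for a.e. $s$ and all $\theta_1,\theta_2$ in the $\epsilon$-ball around $\theta_*$. Then for every $\epsilon>0$ there is $l'_{\rm aug}\in L^2(\mathcal{P})$ such that for a.e. $s$ and all $\theta_1,\theta_2$ in the $\epsilon$-ball around $\theta_*$, $|l_{\rm aug}(s,\theta_1)-l_{\rm aug}(s,\theta_2)|\le l'_{\rm aug}(s)\|\theta_1-\theta_2\|$.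
   Context: Samples $s=(x_0,\dots,x_d,y)$; RIM augmentation with $\lambda=(\lambda_1,\dots,\lambda_d)$, components i.i.d. from $\mathcal{D}$: $x_{0,\lambda_0}=x_0$, $x_{j,\lambda_j}=(1-\lambda_j)x_j+\lambda_jx_{j-1,\lambda_{j-1}}$, $s_\lambda=(x_{0,\lambda_0},\dots,x_{d,\lambda_d},y)$. Disjointness assumption: $\mathcal{S}$ is the disjoint countable union of measurable sets $S_1,S_2,\dots$, each the set of all possible augmentations of a sample, and for $s\in S_j$ and integrable $h$, $\mathbb{E}_{\lambda\sim\mathcal{D}}[h(s_\lambda)]=\mathbb{E}_{s'\sim\mathcal{P}}[h(s')\mid s'\in S_j]$. *)

theory Defs
  imports "HOL-Probability.Probability"
begin

text \<open>A sample is s = (x, y) where x j (for j = 0..d) are the inputs x_0,...,x_d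
  (components x j with j > d are irrelevant and left untouched), and y is the label.\<close>

fun rim_x :: "(nat \<Rightarrow> real) \<Rightarrow> (nat \<Rightarrow> 'x::real_vector) \<Rightarrow> nat \<Rightarrow> 'x" where
  "rim_x lam x 0 = x 0"
| "rim_x lam x (Suc j) = (1 - lam (Suc j)) *\<^sub>R x (Suc j) + lam (Suc j) *\<^sub>R rim_x lam x j"

definition rim_aug :: "nat \<Rightarrow> (nat \<Rightarrow> real) \<Rightarrow> (nat \<Rightarrow> 'x::real_vector) \<times> 'y \<Rightarrow> (nat \<Rightarrow> 'x) \<times> 'y" where
  "rim_aug d lam s = ((\<lambda>j. if j \<le> d then rim_x lam (fst s) j else fst s j), snd s)"

definition lam_dist :: "nat \<Rightarrow> real measure \<Rightarrow> (nat \<Rightarrow> real) measure" where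
  "lam_dist d D = PiM {1..d} (\<lambda>_. D)"

definition l_aug :: "nat \<Rightarrow> real measure \<Rightarrow> ((nat \<Rightarrow> 'x::real_vector) \<times> 'y \<Rightarrow> 'p \<Rightarrow> real)
    \<Rightarrow> (nat \<Rightarrow> 'x) \<times> 'y \<Rightarrow> 'p \<Rightarrow> real" where
  "l_aug d D l s \<theta> = (\<integral>lam. l (rim_aug d lam s) \<theta> \<partial>(lam_dist d D))"

definition in_L2 :: "'a measure \<Rightarrow> ('a \<Rightarrow> real) \<Rightarrow> bool" where
  "in_L2 M f \<longleftrightarrow> f \<in> borel_measurable M \<and> integrable M (\<lambda>s. (f s)\<^sup>2)"

definition disjointness_assumption ::
  "nat \<Rightarrow> real measure \<Rightarrow> ((nat \<Rightarrow> 'x::real_vector) \<times> 'y) measure \<Rightarrow> nat set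
     \<Rightarrow> (nat \<Rightarrow> ((nat \<Rightarrow> 'x) \<times> 'y) set) \<Rightarrow> bool" where
  "disjointness_assumption d D M J S \<longleftrightarrow>
     disjoint_family_on S J \<and>
     (\<Union>j\<in>J. S j) = space M \<and>
     (\<forall>j\<in>J. S j \<in> sets M) \<and>
     (\<forall>j\<in>J. \<exists>s0 \<in> space M. S j = {rim_aug d lam s0 | lam. lam \<in> {1..d} \<rightarrow>\<^sub>E {0..<1}}) \<and>
     (\<forall>j\<in>J. \<forall>s\<in>S j. \<forall>h :: (nat \<Rightarrow> 'x) \<times> 'y \<Rightarrow> real. integrable M h \<longrightarrow>
        (\<integral>lam. h (rim_aug d lam s) \<partial>(lam_dist d D))
          = (\<integral>s'. indicator (S j) s' * h s' \<partial>M) / measure M (S j))"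

end

theory Submission
  imports Defs
begin

text \<open>Under the disjointness assumption, l_aug(s, \<theta>) is the average of l(\<cdot>, \<theta>) over the
  block S_k containing s. Averaging the Lipschitz bound over that block shows that the
  block averages of l' serve as Lipschitz constants for l_aug, and this piecewise constant
  function stays in L^2: on each block, the square of the average is at most the average
  of the square.\<close>

text \<open>On a null set the quotient is 0, exactly as in the disjointness assumption.\<close>

definition set_average :: "'a measure \<Rightarrow> 'a set \<Rightarrow> ('a \<Rightarrow> real) \<Rightarrow> real" where
  "set_average M A f = (\<integral>x. indicator A x * f x \<partial>M) / measure M A"

definition partition_average :: "'a measure \<Rightarrow> (nat \<Rightarrow> 'a set) \<Rightarrow> ('a \<Rightarrow> real) \<Rightarrow> 'a \<Rightarrow> real" where
  "partition_average M T f x = (\<Sum>j. indicator (T j) x * set_average M (T j) f)"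

lemma integrable_indicator_mult:
  fixes f :: "'a \<Rightarrow> real"
  assumes "A \<in> sets M" "integrable M f"
  shows "integrable M (\<lambda>x. indicator A x * f x)"
  using integrable_real_mult_indicator[OF assms] by (simp add: mult.commute)

lemma (in finite_measure) set_average_sq_le:
  fixes f :: "'a \<Rightarrow> real"
  assumes A[measurable]: "A \<in> sets M" and f[measurable]: "f \<in> borel_measurable M"
    and f2: "integrable M (\<lambda>x. (f x)\<^sup>2)"
  shows "(set_average M A f)\<^sup>2 * measure M A \<le> (\<integral>x. indicator A x * (f x)\<^sup>2 \<partial>M)"
proof (cases "measure M A = 0")
  case True
  then show ?thesis by (simp add: integral_nonneg_AE)
next
  case False
  define a where "a = set_average M A f"
  have "integrable M f" using f2 by (rule square_integrable_imp_integrable[OF f])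
  then have int_f: "(\<integral>x. indicator A x * f x \<partial>M) = a * measure M A"
    using False by (simp add: a_def set_average_def)
  have "0 \<le> (\<integral>x. indicator A x * (f x - a)\<^sup>2 \<partial>M)"
    by (intro integral_nonneg_AE) auto
  also have "\<dots> = (\<integral>x. indicator A x * (f x)\<^sup>2 - (2 * a) * (indicator A x * f x)
                      + a\<^sup>2 * indicator A x \<partial>M)"
    by (rule Bochner_Integration.integral_cong) (auto simp: power2_eq_square algebra_simps)
  also have "\<dots> = (\<integral>x. indicator A x * (f x)\<^sup>2 \<partial>M) - a\<^sup>2 * measure M A"
    using integrable_indicator_mult[OF A \<open>integrable M f\<close>] integrable_indicator_mult[OF A f2]
    by (simp add: int_f power2_eq_square emeasure_eq_measure
        Bochner_Integration.integral_add Bochner_Integration.integral_diff)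
  finally show ?thesis by (simp add: a_def)
qed

lemma abs_set_average_diff_le:
  fixes f g h :: "'a \<Rightarrow> real"
  assumes A: "A \<in> sets M"
    and f: "integrable M f" and g: "integrable M g" and h: "integrable M h"
    and bound: "AE x in M. \<bar>f x - g x\<bar> \<le> h x * c"
  shows "\<bar>set_average M A f - set_average M A g\<bar> \<le> set_average M A h * c"
proof -
  have int_diff: "integrable M (\<lambda>x. indicator A x * (f x - g x))"
    using f g by (intro integrable_indicator_mult A) auto
  have "\<bar>\<integral>x. indicator A x * f x \<partial>M - (\<integral>x. indicator A x * g x \<partial>M)\<bar>
          = \<bar>\<integral>x. indicator A x * (f x - g x) \<partial>M\<bar>"
    using f g A by (simp add: integrable_indicator_mult right_diff_distrib)
  also have "\<dots> \<le> (\<integral>x. \<bar>indicator A x * (f x - g x)\<bar> \<partial>M)"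
    using integral_norm_bound[of M "\<lambda>x. indicator A x * (f x - g x)"] by simp
  also have "\<dots> \<le> (\<integral>x. indicator A x * h x * c \<partial>M)"
  proof (rule integral_mono_AE)
    show "integrable M (\<lambda>x. \<bar>indicator A x * (f x - g x)\<bar>)"
      using int_diff by (rule integrable_abs)
    show "integrable M (\<lambda>x. indicator A x * h x * c)"
      using integrable_indicator_mult[OF A h] by simp
    show "AE x in M. \<bar>indicator A x * (f x - g x)\<bar> \<le> indicator A x * h x * c"
      using bound by eventually_elim (simp add: indicator_def)
  qed
  finally show ?thesis
    by (simp add: set_average_def flip: diff_divide_distrib)
      (simp add: divide_right_mono)
qed

lemma partition_average_eq:
  assumes "disjoint_family T" "x \<in> T k"
  shows "partition_average M T f x = set_average M (T k) f"
proof -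
  have "(\<lambda>j. indicator (T j) x * set_average M (T j) f)
          = (\<lambda>j. if j = k then set_average M (T j) f else 0)"
    using assms unfolding disjoint_family_on_def by (intro ext) (auto simp: indicator_def)
  then show ?thesis
    unfolding partition_average_def by (simp add: sums_unique[OF sums_single, symmetric])
qed

lemma partition_average_outside:
  assumes "x \<notin> (\<Union>j. T j)"
  shows "partition_average M T f x = 0"
  using assms by (simp add: partition_average_def)

lemma borel_measurable_partition_average[measurable]:
  assumes [measurable]: "\<And>j. T j \<in> sets M"
  shows "partition_average M T f \<in> borel_measurable M"
  unfolding partition_average_def by measurable

lemma (in finite_measure) integrable_partition_average_sq:
  fixes f :: "'a \<Rightarrow> real"
  assumes T[measurable]: "\<And>j. T j \<in> sets M" and disj: "disjoint_family T"
    and f[measurable]: "f \<in> borel_measurable M" and f2: "integrable M (\<lambda>x. (f x)\<^sup>2)"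
  shows "integrable M (\<lambda>x. (partition_average M T f x)\<^sup>2)"
proof (subst integrable_iff_bounded, intro conjI)
  show "(\<lambda>x. (partition_average M T f x)\<^sup>2) \<in> borel_measurable M" by measurable
  define a where "a j = set_average M (T j) f" for j
  have "(\<integral>\<^sup>+x. ennreal (norm ((partition_average M T f x)\<^sup>2)) \<partial>M)
          = (\<integral>\<^sup>+x. (\<Sum>j. ennreal ((a j)\<^sup>2) * indicator (T j) x) \<partial>M)"
  proof (intro nn_integral_cong)
    fix x
    show "ennreal (norm ((partition_average M T f x)\<^sup>2))
            = (\<Sum>j. ennreal ((a j)\<^sup>2) * indicator (T j) x)"
    proof (cases "x \<in> (\<Union>j. T j)")
      case True
      then obtain k where "x \<in> T k" by blast
      then show ?thesis
        by (simp add: suminf_cmult_indicator[OF disj] partition_average_eq[OF disj] a_def)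
    qed (simp add: partition_average_outside)
  qed
  also have "\<dots> = (\<Sum>j. ennreal ((a j)\<^sup>2) * emeasure M (T j))"
    by (simp add: nn_integral_suminf nn_integral_cmult_indicator)
  also have "\<dots> \<le> (\<Sum>j. \<integral>\<^sup>+x. ennreal ((f x)\<^sup>2) * indicator (T j) x \<partial>M)"
  proof (intro suminf_le allI)
    fix j
    have "ennreal ((a j)\<^sup>2) * emeasure M (T j) = ennreal ((a j)\<^sup>2 * measure M (T j))"
      by (simp add: emeasure_eq_measure ennreal_mult)
    also have "\<dots> \<le> ennreal (\<integral>x. indicator (T j) x * (f x)\<^sup>2 \<partial>M)"
      unfolding a_def by (intro ennreal_leI set_average_sq_le T f f2)
    also have "\<dots> = (\<integral>\<^sup>+x. ennreal (indicator (T j) x * (f x)\<^sup>2) \<partial>M)"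
      by (rule nn_integral_eq_integral[symmetric]) (auto simp: integrable_indicator_mult f2)
    also have "\<dots> = (\<integral>\<^sup>+x. ennreal ((f x)\<^sup>2) * indicator (T j) x \<partial>M)"
      by (intro nn_integral_cong) (simp add: indicator_def)
    finally show "ennreal ((a j)\<^sup>2) * emeasure M (T j)
                    \<le> (\<integral>\<^sup>+x. ennreal ((f x)\<^sup>2) * indicator (T j) x \<partial>M)" .
  qed auto
  also have "\<dots> = (\<integral>\<^sup>+x. ennreal ((f x)\<^sup>2) * indicator (\<Union>j. T j) x \<partial>M)"
    by (simp add: nn_integral_suminf[symmetric] ennreal_suminf_cmult suminf_indicator[OF disj])
  also have "\<dots> \<le> (\<integral>\<^sup>+x. ennreal (norm ((f x)\<^sup>2)) \<partial>M)"
    by (intro nn_integral_mono) (simp add: indicator_def)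
  also have "\<dots> < \<infinity>"
    using f2 by (simp add: integrable_iff_bounded)
  finally show "(\<integral>\<^sup>+x. ennreal (norm ((partition_average M T f x)\<^sup>2)) \<partial>M) < \<infinity>" .
qed

lemma l_aug_eq_set_average:
  assumes "disjointness_assumption d D M J S" "k \<in> J" "s \<in> S k"
    and "integrable M (\<lambda>s. l s \<theta>)"
  shows "l_aug d D l s \<theta> = set_average M (S k) (\<lambda>s. l s \<theta>)"
  using assms unfolding disjointness_assumption_def l_aug_def set_average_def by blast

lemma disjointness_assumption_blocks:
  assumes "disjointness_assumption d D M J S"
  shows "disjoint_family (\<lambda>j. if j \<in> J then S j else {})"
    and "(if j \<in> J then S j else {}) \<in> sets M"
  using assms by (auto simp: disjointness_assumption_def disjoint_family_on_def)

lemma abs_l_aug_diff_le: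
  fixes l' :: "(nat \<Rightarrow> 'x::real_vector) \<times> 'y \<Rightarrow> real"
  assumes disj: "disjointness_assumption d D M J S" and s: "s \<in> space M"
    and l: "integrable M (\<lambda>s. l s \<theta>1)" "integrable M (\<lambda>s. l s \<theta>2)" and l': "integrable M l'"
    and lip: "AE x in M. \<bar>l x \<theta>1 - l x \<theta>2\<bar> \<le> l' x * c"
  shows "\<bar>l_aug d D l s \<theta>1 - l_aug d D l s \<theta>2\<bar>
           \<le> partition_average M (\<lambda>j. if j \<in> J then S j else {}) l' s * c"
proof -
  obtain k where k: "k \<in> J" "s \<in> S k"
    using disj s unfolding disjointness_assumption_def by blast
  have "S k \<in> sets M"
    using disjointness_assumption_blocks(2)[OF disj, of k] k by simp
  moreover have "partition_average M (\<lambda>j. if j \<in> J then S j else {}) l' s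
                   = set_average M (S k) l'"
    using partition_average_eq[OF disjointness_assumption_blocks(1)[OF disj], of s k] k by simp
  ultimately show ?thesis
    using l l' lip
    by (simp only: l_aug_eq_set_average[OF disj k] abs_set_average_diff_le)
qed

theorem proposition1:
  fixes M :: "((nat \<Rightarrow> 'x::real_vector) \<times> 'y) measure"
    and D :: "real measure"
    and d :: nat
    and \<Theta> :: "'p::euclidean_space set"
    and l :: "(nat \<Rightarrow> 'x) \<times> 'y \<Rightarrow> 'p \<Rightarrow> real"
    and \<theta>s :: 'p
    and J :: "nat set"
    and S :: "nat \<Rightarrow> ((nat \<Rightarrow> 'x) \<times> 'y) set"
  assumes P: "prob_space M"
    and D: "prob_space D" "sets D = sets borel" "AE t in D. t \<in> {0..<1}"
    and l_int: "\<forall>\<theta>\<in>\<Theta>. integrable M (\<lambda>s. l s \<theta>)"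
    and argmin: "\<theta>s \<in> \<Theta>" "\<forall>\<theta>\<in>\<Theta>. (\<integral>s. l s \<theta>s \<partial>M) \<le> (\<integral>s. l s \<theta> \<partial>M)"
    and disj: "disjointness_assumption d D M J S"
    and lip: "\<forall>\<epsilon>>0. \<exists>l'. in_L2 M l' \<and>
               (AE s in M. \<forall>\<theta>1\<in>\<Theta> \<inter> ball \<theta>s \<epsilon>. \<forall>\<theta>2\<in>\<Theta> \<inter> ball \<theta>s \<epsilon>.
                  \<bar>l s \<theta>1 - l s \<theta>2\<bar> \<le> l' s * norm (\<theta>1 - \<theta>2))"
  shows "\<forall>\<epsilon>>0. \<exists>l'_aug. in_L2 M l'_aug \<and>
               (AE s in M. \<forall>\<theta>1\<in>\<Theta> \<inter> ball \<theta>s \<epsilon>. \<forall>\<theta>2\<in>\<Theta> \<inter> ball \<theta>s \<epsilon>.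
                  \<bar>l_aug d D l s \<theta>1 - l_aug d D l s \<theta>2\<bar> \<le> l'_aug s * norm (\<theta>1 - \<theta>2))"
proof (intro allI impI)
  fix \<epsilon> :: real assume "\<epsilon> > 0"
  then obtain l' where L2: "in_L2 M l'"
    and l'_lip: "AE s in M. \<forall>\<theta>1\<in>\<Theta> \<inter> ball \<theta>s \<epsilon>. \<forall>\<theta>2\<in>\<Theta> \<inter> ball \<theta>s \<epsilon>.
                   \<bar>l s \<theta>1 - l s \<theta>2\<bar> \<le> l' s * norm (\<theta>1 - \<theta>2)"
    using lip by blast
  interpret prob_space M by (rule P)
  have l'[measurable]: "l' \<in> borel_measurable M" and l'2: "integrable M (\<lambda>s. (l' s)\<^sup>2)"
    using L2 by (auto simp: in_L2_def)
  define T where "T j = (if j \<in> J then S j else {})" for j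
  have T[measurable]: "T j \<in> sets M" "disjoint_family T" for j
    unfolding T_def using disjointness_assumption_blocks[OF disj] by auto
  show "\<exists>l'_aug. in_L2 M l'_aug \<and>
      (AE s in M. \<forall>\<theta>1\<in>\<Theta> \<inter> ball \<theta>s \<epsilon>. \<forall>\<theta>2\<in>\<Theta> \<inter> ball \<theta>s \<epsilon>.
         \<bar>l_aug d D l s \<theta>1 - l_aug d D l s \<theta>2\<bar> \<le> l'_aug s * norm (\<theta>1 - \<theta>2))"
  proof (intro exI conjI AE_I2 ballI)
    show "in_L2 M (partition_average M T l')"
      using T by (simp add: in_L2_def integrable_partition_average_sq l'2)
    fix s \<theta>1 \<theta>2 assume "s \<in> space M" "\<theta>1 \<in> \<Theta> \<inter> ball \<theta>s \<epsilon>" "\<theta>2 \<in> \<Theta> \<inter> ball \<theta>s \<epsilon>"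
    moreover have "AE x in M. \<bar>l x \<theta>1 - l x \<theta>2\<bar> \<le> l' x * norm (\<theta>1 - \<theta>2)"
      using l'_lip by eventually_elim (use \<open>\<theta>1 \<in> _\<close> \<open>\<theta>2 \<in> _\<close> in blast)
    ultimately show "\<bar>l_aug d D l s \<theta>1 - l_aug d D l s \<theta>2\<bar>
                       \<le> partition_average M T l' s * norm (\<theta>1 - \<theta>2)"
      using l_int square_integrable_imp_integrable[OF l' l'2] unfolding T_def
      by (intro abs_l_aug_diff_le[OF disj]) auto
  qed
qed

end
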